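(* Let $Z = (G, c) \subseteq \mathbb{R}^{n_x}$ be a zonotope with $G = [g_1, \dots, g_N]$, let $W \subseteq \mathbb{R}^{n_w}$ be a polytope with vertex set $V = \{w_1, \dots, w_M\}$ ($W$ is the convex hull of $V$), let $E \in \mathbb{R}^{n_x \times n_w}$, and let $H \in \mathbb{R}^{L \times n_x}$, $h \in \mathbb{R}^L$ satisfy $EW = \{x \mid Hx \leq h\}$. Let $b_1, \dots, b_N > 0$ and $d_1, \dots, d_N \geq 0$ be constants. Let $(\theta, \overline{\alpha}, \overline{c})$ be a minimizer of $$\min_{\theta, \alpha, c'} \sum_{i=1}^N b_i \alpha_i \ \text{ s.t. } \ \forall j: c' + \sum_{i=1}^N \theta_{ij} g_i = E w_j, \ |\theta_{ij}| \leq \alpha_i \leq 1 \ (i=1,\dots,N),$$ and set $\overline{\mathfrak{Z}}(Z, EW) = ([\overline{\alpha}_1 g_1, \dots, \overline{\alpha}_N g_N], \overline{c})$. Let $(\underline{\alpha}, \underline{c})$ be a maximizer of $$\max_{\alpha, c'} \sum_{i=1}^N d_i \log(\alpha_i) \ \text{ s.t. } \ H c' + |HG|\alpha \leq h, \ 0 \leq \alpha \leq 1,$$ and set $\underline{\mathfrak{Z}}(Z, EW) = ([\underline{\alpha}_1 g_1, \dots, \underline{\alpha}_N g_N], \underline{c})$. Then $$Z \ominus \overline{\mathfrak{Z}}(Z, EW) \subseteq Z \ominus EW \subseteq Z \ominus \underline{\mathfrak{Z}}(Z, EW),$$ and moreover $Z \ominus \overline{\mathfrak{Z}}(Z, EW)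 = ([(1-\overline{\alpha}_1) g_1, \dots, (1-\overline{\alpha}_N) g_N], c - \overline{c})$ and $Z \ominus \underline{\mathfrak{Z}}(Z, EW) = ([(1-\underline{\alpha}_1) g_1, \dots, (1-\underline{\alpha}_N) g_N], c - \underline{c})$.
   Context: A zonotope with generator-representation $(G, c)$, where $G = [g_1, \dots, g_N] \in \mathbb{R}^{n \times N}$ and $c \in \mathbb{R}^n$, is the set $\{c + \sum_{i=1}^N \theta_i g_i \mid \theta_i \in [-1,1]\}$; it is denoted $(G, c)$. $EW = \{Ew \mid w \in W\}$; $|HG|$ is the entrywise absolute value of $HG$; vector inequalities are entrywise. The Minkowski difference is $X \ominus Y = \{z \mid z + Y \subseteq X\}$. *)

theory Defs
  imports "HOL-Analysis.Analysis" "HOL-Library.Extended_Real"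
begin

definition zonotope :: "('i::finite \<Rightarrow> 'a::real_vector) \<Rightarrow> 'a \<Rightarrow> 'a set" where
  "zonotope g c = {c + (\<Sum>i\<in>UNIV. \<theta> i *\<^sub>R g i) | \<theta>. \<forall>i. \<theta> i \<in> {-1..1}}"

definition minkowski_diff :: "'a::real_vector set \<Rightarrow> 'a set \<Rightarrow> 'a set" where
  "minkowski_diff X Y = {z. (\<lambda>y. z + y) ` Y \<subseteq> X}"

text \<open>Feasible set of the outer (minimisation) problem; theta i w is theta_{ij} for vertex w = w_j.\<close>
definition outer_feasible ::
  "real^'nw^'nx \<Rightarrow> ('i::finite \<Rightarrow> real^'nx) \<Rightarrow> (real^'nw) set
   \<Rightarrow> ('i \<Rightarrow> real^'nw \<Rightarrow> real) \<Rightarrow> ('i \<Rightarrow> real) \<Rightarrow> real^'nx \<Rightarrow> bool" where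
  "outer_feasible E g V \<theta> \<alpha> c' \<longleftrightarrow>
     (\<forall>w\<in>V. c' + (\<Sum>i\<in>UNIV. \<theta> i w *\<^sub>R g i) = E *v w) \<and>
     (\<forall>i. (\<forall>w\<in>V. \<bar>\<theta> i w\<bar> \<le> \<alpha> i) \<and> \<alpha> i \<le> 1)"

definition outer_minimizer ::
  "('i::finite \<Rightarrow> real) \<Rightarrow> real^'nw^'nx \<Rightarrow> ('i \<Rightarrow> real^'nx) \<Rightarrow> (real^'nw) set
   \<Rightarrow> ('i \<Rightarrow> real^'nw \<Rightarrow> real) \<Rightarrow> ('i \<Rightarrow> real) \<Rightarrow> real^'nx \<Rightarrow> bool" where
  "outer_minimizer b E g V \<theta> \<alpha> c' \<longleftrightarrow>
     outer_feasible E g V \<theta> \<alpha> c' \<and>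
     (\<forall>\<theta>' \<alpha>' c''. outer_feasible E g V \<theta>' \<alpha>' c'' \<longrightarrow>
        (\<Sum>i\<in>UNIV. b i * \<alpha> i) \<le> (\<Sum>i\<in>UNIV. b i * \<alpha>' i))"

definition inner_feasible ::
  "real^'nx^'l \<Rightarrow> real^'l \<Rightarrow> ('i::finite \<Rightarrow> real^'nx) \<Rightarrow> ('i \<Rightarrow> real) \<Rightarrow> real^'nx \<Rightarrow> bool" where
  "inner_feasible H h g \<alpha> c' \<longleftrightarrow>
     (\<forall>l. (H *v c') $ l + (\<Sum>i\<in>UNIV. \<bar>(H *v g i) $ l\<bar> * \<alpha> i) \<le> h $ l) \<and>
     (\<forall>i. 0 \<le> \<alpha> i \<and> \<alpha> i \<le> 1)"

definition dlog :: "real \<Rightarrow> real \<Rightarrow> ereal" where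
  "dlog d a = (if 0 < a then ereal (d * ln a) else if d = 0 then 0 else -\<infinity>)"

definition inner_maximizer ::
  "('i::finite \<Rightarrow> real) \<Rightarrow> real^'nx^'l \<Rightarrow> real^'l \<Rightarrow> ('i \<Rightarrow> real^'nx)
   \<Rightarrow> ('i \<Rightarrow> real) \<Rightarrow> real^'nx \<Rightarrow> bool" where
  "inner_maximizer d H h g \<alpha> c' \<longleftrightarrow>
     inner_feasible H h g \<alpha> c' \<and>
     (\<forall>\<alpha>' c''. inner_feasible H h g \<alpha>' c'' \<longrightarrow>
        (\<Sum>i\<in>UNIV. dlog (d i) (\<alpha>' i)) \<le> (\<Sum>i\<in>UNIV. dlog (d i) (\<alpha> i)))"

end

theory Submission
  imports Defs
begin

text \<open>
  For \<open>0 \<le> \<alpha> \<le> 1\<close> the zonotope \<open>(G, c)\<close> splits as the Minkowski sum of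
  \<open>((1 - \<alpha>) G, c - c')\<close> and \<open>(\<alpha> G, c')\<close>, and a compact summand can be cancelled against a
  closed convex one (separate a point outside from the closed convex set by a hyperplane and
  compare at a minimiser of the linear functional on the compact summand); this gives both closed
  forms. Feasibility in the outer problem puts every \<open>E w\<^sub>j\<close>, hence by convexity all of
  \<open>EW\<close>, into \<open>(\<alpha>\<^sub>o G, c\<^sub>o)\<close>; feasibility in the inner problem bounds each row of
  \<open>H x\<close> over \<open>(\<alpha>\<^sub>u G, c\<^sub>u)\<close> by \<open>h\<close>, so that zonotope lies in \<open>EW\<close>. Since the Minkowski
  difference is antitone in its second argument, the two inclusions follow.
\<close>

lemma zonotope_eq_image_cube:
  fixes g :: "'i::finite \<Rightarrow> 'a::real_vector"
  shows "zonotope g c = (+) c ` (\<lambda>x::real^'i. \<Sum>i\<in>UNIV. x $ i *\<^sub>R g i) ` cbox (- 1) 1"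
proof (intro set_eqI iffI)
  fix z assume "z \<in> zonotope g c"
  then obtain \<theta> where "z = c + (\<Sum>i\<in>UNIV. \<theta> i *\<^sub>R g i)" "\<forall>i. \<theta> i \<in> {-1..1}"
    unfolding zonotope_def by blast
  then show "z \<in> (+) c ` (\<lambda>x::real^'i. \<Sum>i\<in>UNIV. x $ i *\<^sub>R g i) ` cbox (- 1) 1"
    by (intro image_eqI[of _ _ "\<Sum>i\<in>UNIV. \<theta> i *\<^sub>R g i"] image_eqI[of _ _ "vec_lambda \<theta>"])
       (auto simp: mem_box_cart)
qed (auto simp: zonotope_def mem_box_cart)

lemma convex_zonotope:
  fixes g :: "'i::finite \<Rightarrow> 'a::real_vector"
  shows "convex (zonotope g c)"
proof -
  have "linear (\<lambda>x::real^'i. \<Sum>i\<in>UNIV. x $ i *\<^sub>R g i)"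
    by (auto intro!: linearI simp: sum.distrib scaleR_add_left scaleR_sum_right)
  then show ?thesis
    unfolding zonotope_eq_image_cube
    by (intro convex_translation convex_linear_image convex_box)
qed

lemma compact_zonotope:
  fixes g :: "'i::finite \<Rightarrow> 'a::real_normed_vector"
  shows "compact (zonotope g c)"
  unfolding zonotope_eq_image_cube
  by (intro compact_continuous_image continuous_intros compact_cbox)

lemma center_mem_zonotope: "c \<in> zonotope g c"
  unfolding zonotope_def by (rule CollectI, rule exI[of _ "\<lambda>_. 0"]) auto

lemma mem_zonotope_scaled:
  assumes "\<forall>i. \<bar>t i\<bar> \<le> \<alpha> i"
  shows "c + (\<Sum>i\<in>UNIV. t i *\<^sub>R g i) \<in> zonotope (\<lambda>i. \<alpha> i *\<^sub>R g i) c"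
proof -
  \<comment> \<open>If \<open>\<alpha> i = 0\<close> then \<open>t i = 0\<close>, and \<open>t i / 0 = 0\<close> is still the right coefficient.\<close>
  have "t i / \<alpha> i * \<alpha> i = t i" and "t i / \<alpha> i \<in> {-1..1}" for i
    using assms[rule_format, of i] by (auto simp: abs_le_iff divide_le_eq_1 le_divide_eq)
  then show ?thesis
    unfolding zonotope_def by (intro CollectI exI[of _ "\<lambda>i. t i / \<alpha> i"]) simp
qed

lemma minkowski_diff_antimono:
  "Y' \<subseteq> Y \<Longrightarrow> minkowski_diff X Y \<subseteq> minkowski_diff X Y'"
  unfolding minkowski_diff_def by blast

lemma minkowski_diff_sums_cancel:
  fixes A B :: "'a::{real_inner,heine_borel} set"
  assumes "convex A" "closed A" "compact B" "B \<noteq> {}"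
  shows "minkowski_diff {a + b | a b. a \<in> A \<and> b \<in> B} B = A"
proof
  show "A \<subseteq> minkowski_diff {a + b | a b. a \<in> A \<and> b \<in> B} B"
    unfolding minkowski_diff_def by blast
  show "minkowski_diff {a + b | a b. a \<in> A \<and> b \<in> B} B \<subseteq> A"
  proof (rule subsetI, rule ccontr)
    fix z assume z: "z \<in> minkowski_diff {a + b | a b. a \<in> A \<and> b \<in> B} B" and "z \<notin> A"
    then obtain u \<beta> where sep: "u \<bullet> z < \<beta>" "\<forall>a\<in>A. \<beta> < u \<bullet> a"
      using separating_hyperplane_closed_point[OF assms(1,2)] by blast
    have "continuous_on B (\<lambda>x. u \<bullet> x)"
      by (intro continuous_intros)
    then obtain y where y: "y \<in> B" "\<forall>b\<in>B. u \<bullet> y \<le> u \<bullet> b"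
      using continuous_attains_inf[OF assms(3,4)] by blast
    then obtain a b where "a \<in> A" "b \<in> B" "z + y = a + b"
      using z unfolding minkowski_diff_def by blast
    then have "u \<bullet> z + u \<bullet> y = u \<bullet> a + u \<bullet> b"
      by (metis inner_add_right)
    moreover have "\<beta> < u \<bullet> a" "u \<bullet> y \<le> u \<bullet> b"
      using sep(2) y(2) \<open>a \<in> A\<close> \<open>b \<in> B\<close> by auto
    ultimately show False
      using sep(1) by linarith
  qed
qed

lemma zonotope_eq_sums_scaled:
  assumes "\<forall>i. 0 \<le> \<alpha> i \<and> \<alpha> i \<le> 1"
  shows "zonotope g c = {a + b | a b. a \<in> zonotope (\<lambda>i. (1 - \<alpha> i) *\<^sub>R g i) (c - c')
                                     \<and> b \<in> zonotope (\<lambda>i. \<alpha> i *\<^sub>R g i) c'}"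
    (is "_ = {a + b | a b. a \<in> ?A \<and> b \<in> ?B}")
proof (intro set_eqI iffI)
  fix z assume "z \<in> zonotope g c"
  then obtain \<theta> where \<theta>: "z = c + (\<Sum>i\<in>UNIV. \<theta> i *\<^sub>R g i)" "\<forall>i. \<theta> i \<in> {-1..1}"
    unfolding zonotope_def by blast
  let ?a = "c - c' + (\<Sum>i\<in>UNIV. \<theta> i *\<^sub>R (1 - \<alpha> i) *\<^sub>R g i)"
  let ?b = "c' + (\<Sum>i\<in>UNIV. \<theta> i *\<^sub>R \<alpha> i *\<^sub>R g i)"
  have "z = ?a + ?b"
    unfolding \<theta>(1) by (simp add: algebra_simps sum.distrib[symmetric])
  moreover have "?a \<in> ?A" "?b \<in> ?B"
    using \<theta>(2) unfolding zonotope_def by blast+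
  ultimately show "z \<in> {a + b | a b. a \<in> ?A \<and> b \<in> ?B}" by blast
next
  fix z assume "z \<in> {a + b | a b. a \<in> ?A \<and> b \<in> ?B}"
  then obtain t p where
    tp: "z = (c - c' + (\<Sum>i\<in>UNIV. t i *\<^sub>R (1 - \<alpha> i) *\<^sub>R g i)) + (c' + (\<Sum>i\<in>UNIV. p i *\<^sub>R \<alpha> i *\<^sub>R g i))"
    and t: "\<forall>i. t i \<in> {-1..1}" and p: "\<forall>i. p i \<in> {-1..1}"
    unfolding zonotope_def by blast
  let ?\<theta> = "\<lambda>i. (1 - \<alpha> i) * t i + \<alpha> i * p i"
  have "z = c + (\<Sum>i\<in>UNIV. ?\<theta> i *\<^sub>R g i)"
    unfolding tp by (simp add: algebra_simps sum.distrib[symmetric])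
  moreover have "?\<theta> i \<in> {-1..1}" for i
    using convex_bound_le[of "t i" 1 "p i" "1 - \<alpha> i" "\<alpha> i"]
          convex_bound_le[of "- t i" 1 "- p i" "1 - \<alpha> i" "\<alpha> i"] assms t p
    by auto
  ultimately show "z \<in> zonotope g c"
    unfolding zonotope_def by (intro CollectI exI[of _ ?\<theta>]) simp
qed

lemma minkowski_diff_zonotope_scaled:
  fixes g :: "'i::finite \<Rightarrow> 'a::euclidean_space"
  assumes "\<forall>i. 0 \<le> \<alpha> i \<and> \<alpha> i \<le> 1"
  shows "minkowski_diff (zonotope g c) (zonotope (\<lambda>i. \<alpha> i *\<^sub>R g i) c')
       = zonotope (\<lambda>i. (1 - \<alpha> i) *\<^sub>R g i) (c - c')"
  unfolding zonotope_eq_sums_scaled[OF assms, of g c c']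
  by (intro minkowski_diff_sums_cancel convex_zonotope compact_imp_closed compact_zonotope)
     (use center_mem_zonotope in blast)

lemma outer_feasible_weights_bounded:
  assumes "outer_feasible E g V \<theta> \<alpha> c'" "V \<noteq> {}"
  shows "0 \<le> \<alpha> i \<and> \<alpha> i \<le> 1"
proof -
  obtain w where "w \<in> V" using assms(2) by blast
  then have "\<bar>\<theta> i w\<bar> \<le> \<alpha> i" "\<alpha> i \<le> 1"
    using assms(1) unfolding outer_feasible_def by auto
  then show ?thesis by linarith
qed

lemma outer_minimizer_vertices_nonempty:
  assumes "\<forall>i. 0 < b i" "outer_minimizer b E g V \<theta> \<alpha> c'"
  shows "V \<noteq> {}"
proof
  assume "V = {}"
  have "\<alpha> i \<le> 1" for i
    using assms(2) unfolding outer_minimizer_def outer_feasible_def by blast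
  then have "\<alpha> i - 1 \<le> 1" for i
    by (smt (verit))
  with \<open>V = {}\<close> have "outer_feasible E g V \<theta> (\<lambda>i. \<alpha> i - 1) c'"
    unfolding outer_feasible_def by blast
  then have "(\<Sum>i\<in>UNIV. b i * \<alpha> i) \<le> (\<Sum>i\<in>UNIV. b i * (\<alpha> i - 1))"
    using assms(2) unfolding outer_minimizer_def by blast
  also have "\<dots> = (\<Sum>i\<in>UNIV. b i * \<alpha> i) - (\<Sum>i\<in>UNIV. b i)"
    by (simp add: right_diff_distrib sum_subtractf)
  finally have "(\<Sum>i\<in>UNIV. b i) \<le> 0" by simp
  moreover have "0 < (\<Sum>i\<in>UNIV. b i)"
    using assms(1) by (intro sum_pos) auto
  ultimately show False by simp
qed

lemma outer_feasible_image_subset_zonotope: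
  assumes "outer_feasible E g V \<theta> \<alpha> c'"
  shows "(\<lambda>w. E *v w) ` (convex hull V) \<subseteq> zonotope (\<lambda>i. \<alpha> i *\<^sub>R g i) c'"
proof -
  have "(\<lambda>w. E *v w) ` V \<subseteq> zonotope (\<lambda>i. \<alpha> i *\<^sub>R g i) c'"
  proof
    fix x assume "x \<in> (\<lambda>w. E *v w) ` V"
    then obtain w where w: "w \<in> V" and x: "x = c' + (\<Sum>i\<in>UNIV. \<theta> i w *\<^sub>R g i)"
      using assms unfolding outer_feasible_def by auto
    have "\<forall>i. \<bar>\<theta> i w\<bar> \<le> \<alpha> i"
      using assms w unfolding outer_feasible_def by blast
    then show "x \<in> zonotope (\<lambda>i. \<alpha> i *\<^sub>R g i) c'"
      unfolding x by (rule mem_zonotope_scaled)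
  qed
  then show ?thesis
    unfolding convex_hull_linear_image[OF matrix_vector_mul_linear]
    by (intro hull_minimal convex_zonotope)
qed

lemma inner_feasible_zonotope_subset_polyhedron:
  assumes "inner_feasible H h g \<alpha> c'"
  shows "zonotope (\<lambda>i. \<alpha> i *\<^sub>R g i) c' \<subseteq> {x. \<forall>l. (H *v x) $ l \<le> h $ l}"
proof (intro subsetI CollectI allI)
  fix x l assume "x \<in> zonotope (\<lambda>i. \<alpha> i *\<^sub>R g i) c'"
  then obtain p where x: "x = c' + (\<Sum>i\<in>UNIV. p i *\<^sub>R \<alpha> i *\<^sub>R g i)" and p: "\<forall>i. p i \<in> {-1..1}"
    unfolding zonotope_def by blast
  have \<alpha>: "\<forall>i. 0 \<le> \<alpha> i"
    using assms unfolding inner_feasible_def by blast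
  have "(H *v x) $ l = (H *v c') $ l + (\<Sum>i\<in>UNIV. p i * \<alpha> i * (H *v g i) $ l)"
    unfolding x by (simp add: matrix_vector_right_distrib linear_sum[OF matrix_vector_mul_linear]
        matrix_vector_mult_scaleR sum_component)
  also have "\<dots> \<le> (H *v c') $ l + (\<Sum>i\<in>UNIV. \<bar>(H *v g i) $ l\<bar> * \<alpha> i)"
  proof (intro add_left_mono sum_mono)
    fix i
    have "p i * \<alpha> i * (H *v g i) $ l \<le> \<bar>p i\<bar> * (\<bar>(H *v g i) $ l\<bar> * \<alpha> i)"
      using \<alpha> by (metis abs_ge_self abs_mult abs_of_nonneg mult.assoc mult.commute)
    also have "\<dots> \<le> \<bar>(H *v g i) $ l\<bar> * \<alpha> i"
      using p \<alpha> by (intro mult_left_le_one_le) (auto simp: abs_le_iff)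
    finally show "p i * \<alpha> i * (H *v g i) $ l \<le> \<bar>(H *v g i) $ l\<bar> * \<alpha> i" .
  qed
  also have "\<dots> \<le> h $ l"
    using assms unfolding inner_feasible_def by blast
  finally show "(H *v x) $ l \<le> h $ l" .
qed

theorem proposition4:
  fixes g :: "'i::finite \<Rightarrow> real^'nx"
    and c :: "real^'nx"
    and W V :: "(real^'nw) set"
    and E :: "real^'nw^'nx"
    and H :: "real^'nx^'l"
    and h :: "real^'l"
    and b d :: "'i \<Rightarrow> real"
    and \<theta> :: "'i \<Rightarrow> real^'nw \<Rightarrow> real"
    and \<alpha>o \<alpha>u :: "'i \<Rightarrow> real"
    and co cu :: "real^'nx"
  assumes "finite V"
    and "W = convex hull V"
    and "V = {v. v extreme_point_of W}"
    and "(\<lambda>w. E *v w) ` W = {x. \<forall>l. (H *v x) $ l \<le> h $ l}"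
    and "\<forall>i. 0 < b i"
    and "\<forall>i. 0 \<le> d i"
    and "outer_minimizer b E g V \<theta> \<alpha>o co"
    and "inner_maximizer d H h g \<alpha>u cu"
  shows "minkowski_diff (zonotope g c) (zonotope (\<lambda>i. \<alpha>o i *\<^sub>R g i) co)
           \<subseteq> minkowski_diff (zonotope g c) ((\<lambda>w. E *v w) ` W)
      \<and> minkowski_diff (zonotope g c) ((\<lambda>w. E *v w) ` W)
           \<subseteq> minkowski_diff (zonotope g c) (zonotope (\<lambda>i. \<alpha>u i *\<^sub>R g i) cu)
      \<and> minkowski_diff (zonotope g c) (zonotope (\<lambda>i. \<alpha>o i *\<^sub>R g i) co)
           = zonotope (\<lambda>i. (1 - \<alpha>o i) *\<^sub>R g i) (c - co)
      \<and> minkowski_diff (zonotope g c) (zonotope (\<lambda>i. \<alpha>u i *\<^sub>R g i) cu)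
           = zonotope (\<lambda>i. (1 - \<alpha>u i) *\<^sub>R g i) (c - cu)"
proof -
  have outer_feasible: "outer_feasible E g V \<theta> \<alpha>o co"
    using assms(7) unfolding outer_minimizer_def by blast
  have inner_feasible: "inner_feasible H h g \<alpha>u cu"
    using assms(8) unfolding inner_maximizer_def by blast
  have \<alpha>o: "\<forall>i. 0 \<le> \<alpha>o i \<and> \<alpha>o i \<le> 1"
    using outer_feasible_weights_bounded[OF outer_feasible
        outer_minimizer_vertices_nonempty[OF assms(5,7)]] by blast
  have \<alpha>u: "\<forall>i. 0 \<le> \<alpha>u i \<and> \<alpha>u i \<le> 1"
    using inner_feasible unfolding inner_feasible_def by blast
  have outer_inclusion: "(\<lambda>w. E *v w) ` W \<subseteq> zonotope (\<lambda>i. \<alpha>o i *\<^sub>R g i) co"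
    unfolding assms(2) by (rule outer_feasible_image_subset_zonotope[OF outer_feasible])
  have inner_inclusion: "zonotope (\<lambda>i. \<alpha>u i *\<^sub>R g i) cu \<subseteq> (\<lambda>w. E *v w) ` W"
    unfolding assms(4) by (rule inner_feasible_zonotope_subset_polyhedron[OF inner_feasible])
  show ?thesis
    by (intro conjI minkowski_diff_antimono outer_inclusion inner_inclusion
        minkowski_diff_zonotope_scaled \<alpha>o \<alpha>u)
qed

end
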